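(* Let $G$ be a profinite group and let $L$, $U$, $V$ be closed subgroups of $G$ such that $L$ normalises $U$ and $V$. For every smooth representation $M\in\operatorname{Rep}(G)$ there is a linear automorphism $z_M\in\operatorname{GL}(M)$, commuting with the action of $L$ and with the operators $e_U$ and $e_V$ on $M$, such that $z_M^{-1}e_Ue_V$ is an idempotent in $\operatorname{End}_{\mathbb C}(M)$.
   Context: For a profinite group $G$, $\operatorname{Rep}(G)$ denotes the category of smooth complex representations of $G$ (every vector is fixed by some open subgroup). For a closed subgroup $H\subseteq G$, $e_H$ denotes the normalised Haar measure of $H$ (total mass $1$); it acts on every smooth representation $M$ of $G$ by $m\mapsto\int_H h\cdot m\,\mathrm dh$, i.e. as the projection onto the $H$-fixed vectors $M^H$. *)

theory Defs
  imports "HOL-Analysis.Analysis" "HOL-Algebra.Coset"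
begin

definition profinite_group :: "('g, 'b) monoid_scheme \<Rightarrow> 'g topology \<Rightarrow> bool" where
  "profinite_group G T \<longleftrightarrow>
     group G \<and> topspace T = carrier G \<and>
     continuous_map (prod_topology T T) T (\<lambda>(x, y). x \<otimes>\<^bsub>G\<^esub> y) \<and>
     continuous_map T T (\<lambda>x. inv\<^bsub>G\<^esub> x) \<and>
     compact_space T \<and> Hausdorff_space T \<and>
     (\<forall>x \<in> topspace T. connected_component_of_set T x = {x})"

definition closed_subgroup :: "('g, 'b) monoid_scheme \<Rightarrow> 'g topology \<Rightarrow> 'g set \<Rightarrow> bool" where
  "closed_subgroup G T H \<longleftrightarrow> subgroup H G \<and> closedin T H"

definition normalises :: "('g, 'b) monoid_scheme \<Rightarrow> 'g set \<Rightarrow> 'g set \<Rightarrow> bool" where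
  "normalises G L U \<longleftrightarrow> (\<forall>l \<in> L. (\<lambda>u. l \<otimes>\<^bsub>G\<^esub> u \<otimes>\<^bsub>G\<^esub> inv\<^bsub>G\<^esub> l) ` U = U)"

definition smooth_rep ::
  "('g, 'b) monoid_scheme \<Rightarrow> 'g topology \<Rightarrow> (complex \<Rightarrow> 'v::ab_group_add \<Rightarrow> 'v) \<Rightarrow> ('g \<Rightarrow> 'v \<Rightarrow> 'v) \<Rightarrow> bool" where
  "smooth_rep G T smul \<rho> \<longleftrightarrow>
     Vector_Spaces.vector_space smul \<and>
     (\<forall>g \<in> carrier G. Vector_Spaces.linear smul smul (\<rho> g)) \<and>
     \<rho> \<one>\<^bsub>G\<^esub> = id \<and>
     (\<forall>g \<in> carrier G. \<forall>h \<in> carrier G. \<rho> (g \<otimes>\<^bsub>G\<^esub> h) = \<rho> g \<circ> \<rho> h) \<and>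
     (\<forall>m. \<exists>K. subgroup K G \<and> openin T K \<and> (\<forall>k \<in> K. \<rho> k m = m))"

definition stab :: "('g, 'b) monoid_scheme \<Rightarrow> ('g \<Rightarrow> 'v \<Rightarrow> 'v) \<Rightarrow> 'v \<Rightarrow> 'g set" where
  "stab G \<rho> m = {g \<in> carrier G. \<rho> g m = m}"

text \<open>The action of the normalised Haar measure e_H on a smooth vector m:
  h \<mapsto> h.m is constant on the left cosets of the open finite-index subgroup
  H \<inter> Stab(m) of H, each of Haar measure 1/[H : H \<inter> Stab(m)], so the integral
  is the average over these cosets.\<close>
definition haar_proj ::
  "('g, 'b) monoid_scheme \<Rightarrow> (complex \<Rightarrow> 'v::ab_group_add \<Rightarrow> 'v) \<Rightarrow> ('g \<Rightarrow> 'v \<Rightarrow> 'v) \<Rightarrow> 'g set \<Rightarrow> 'v \<Rightarrow> 'v" where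
  "haar_proj G smul \<rho> H m =
     (let Cs = (\<lambda>h. h <#\<^bsub>G\<^esub> (H \<inter> stab G \<rho> m)) ` H in
      smul (1 / of_nat (card Cs)) (\<Sum>C\<in>Cs. \<rho> (SOME c. c \<in> C) m))"

end

theory Submission
  imports Defs "HOL-Algebra.Left_Coset"
begin

text \<open>
  Write \<open>P = e\<^sub>U\<close>, \<open>Q = e\<^sub>V\<close>. The operator \<open>c = 1 - (P - Q)\<^sup>2\<close> commutes with \<open>P\<close>, \<open>Q\<close> and
  everything commuting with both, and \<open>c P Q = P Q P Q\<close>. Every vector lies in a finite-dimensional
  \<open>G\<close>-stable subspace (the span of a finite orbit) on which \<open>G\<close> acts through a finite quotient
  \<open>G/N\<close>; there \<open>e\<^sub>H\<close> is a finite average over \<open>H/(H \<inter> N)\<close>, and averaging over \<open>G/N\<close> gives an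
  invariant inner product for which \<open>P\<close> and \<open>Q\<close> are orthogonal projections. Hence \<open>c\<close> is
  self-adjoint there, so \<open>ker c\<^sup>2 = ker c\<close>, the space splits as \<open>ker c \<oplus> range c\<close> (Fitting), and
  \<open>P Q\<close> vanishes on \<open>ker c\<close>. Adding to \<open>c\<close> the projection onto \<open>ker c\<close> along \<open>range c\<close> gives an
  invertible \<open>z\<close> with the same commutation properties and \<open>z P Q = P Q P Q\<close>, so that
  \<open>z\<^sup>-\<^sup>1 P Q\<close> is idempotent.
\<close>

no_notation vector_scalar_mult (infixl "*s" 70)
no_notation (ASCII) subset_mset (infix "<#" 50)

section \<open>Two locally orthogonal projections\<close>

lemma inv_comp_idempotent:
  assumes "bij z" and "z \<circ> R = R \<circ> z" and "z \<circ> R = R \<circ> R"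
  shows "(Hilbert_Choice.inv z \<circ> R) \<circ> (Hilbert_Choice.inv z \<circ> R) = Hilbert_Choice.inv z \<circ> R"
proof -
  let ?w = "Hilbert_Choice.inv z"
  have wz: "?w \<circ> z = id" using assms(1) by (simp add: bij_is_inj)
  have zw: "z \<circ> ?w = id" using assms(1) bij_is_surj surj_iff by blast
  have "?w \<circ> R = ?w \<circ> (R \<circ> z) \<circ> ?w" using zw by (simp add: comp_assoc)
  also have "\<dots> = R \<circ> ?w" using assms(2) wz by (metis comp_assoc id_comp)
  finally have commute: "?w \<circ> R = R \<circ> ?w" .
  have "(?w \<circ> R) \<circ> (?w \<circ> R) = ?w \<circ> ?w \<circ> (R \<circ> R)" using commute by (metis comp_assoc)
  also have "\<dots> = ?w \<circ> (?w \<circ> z) \<circ> R" using assms(3) by (simp add: comp_assoc)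
  finally show ?thesis using wz by simp
qed

lemma funpow_kernel_stable:
  fixes f :: "'a \<Rightarrow> 'a::zero"
  assumes "f 0 = 0" and "\<And>y. f (f y) = 0 \<Longrightarrow> f y = 0" and "(f ^^ k) y = 0"
  shows "f y = 0"
  using assms(3)
proof (induction k arbitrary: y)
  case 0
  then show ?case using assms(1) by simp
next
  case (Suc k)
  then have "f (f y) = 0" by (simp add: funpow_Suc_right del: funpow.simps)
  then show ?case by (rule assms(2))
qed

context vector_space
begin

lemma linear_funpow:
  assumes "Vector_Spaces.linear scale scale f"
  shows "Vector_Spaces.linear scale scale (f ^^ n)"
  by (induction n)
    (simp_all add: linear_ident Vector_Spaces.linear_compose[OF _ assms, unfolded comp_def])

lemma iterates_dependent:
  assumes f: "Vector_Spaces.linear scale scale f" and S: "finite S" "f ` span S \<subseteq> span S"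
    and x: "x \<in> span S"
  obtains c where "(\<Sum>i\<le>card S. c i *s (f ^^ i) x) = 0" and "\<exists>i\<le>card S. c i \<noteq> 0"
proof -
  define v where "v i = (f ^^ i) x" for i
  have v_span: "v i \<in> span S" for i
    by (induction i) (use S(2) x in \<open>auto simp: v_def\<close>)
  show thesis
  proof (cases "inj_on v {..card S}")
    case True
    have "dependent (v ` {..card S})"
    proof (rule ccontr)
      assume "independent (v ` {..card S})"
      then have "card (v ` {..card S}) \<le> card S"
        using independent_span_bound[OF S(1)] v_span by blast
      with True show False by (simp add: card_image)
    qed
    then obtain u where u: "\<exists>w\<in>v ` {..card S}. u w \<noteq> 0" "(\<Sum>w\<in>v ` {..card S}. u w *s w) = 0"
      by (auto simp: dependent_finite)
    have "(\<Sum>i\<le>card S. u (v i) *s v i) = 0" using u(2) by (simp add: sum.reindex[OF True])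
    then show thesis using u(1) by (intro that[of "u \<circ> v"]) (auto simp: v_def)
  next
    case False
    then obtain i j where ij: "i \<le> card S" "j \<le> card S" "i \<noteq> j" "v i = v j"
      by (auto simp: inj_on_def)
    define c :: "nat \<Rightarrow> 'a" where "c k = (if k = i then 1 else if k = j then -1 else 0)" for k
    have "(\<Sum>k\<le>card S. c k *s v k) = (\<Sum>k\<in>{i, j}. c k *s v k)"
      by (rule sum.mono_neutral_right) (use ij in \<open>auto simp: c_def\<close>)
    also have "\<dots> = 0" using ij by (simp add: c_def)
    finally show thesis using ij by (intro that[of c]) (auto simp: c_def v_def)
  qed
qed

lemma fitting_decomposition:
  assumes f: "Vector_Spaces.linear scale scale f" and S: "finite S" "f ` span S \<subseteq> span S"
    and x: "x \<in> span S" and ker: "\<And>y. f (f y) = 0 \<Longrightarrow> f y = 0"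
  shows "\<exists>a b. f a = 0 \<and> x = a + f b"
proof -
  interpret f: Vector_Spaces.linear scale scale f by (rule f)
  obtain c where rel: "(\<Sum>i\<le>card S. c i *s (f ^^ i) x) = 0" and nz: "\<exists>i\<le>card S. c i \<noteq> 0"
    by (rule iterates_dependent[OF f S x])
  define n where "n = card S"
  define k where "k = (LEAST i. c i \<noteq> 0)"
  have ck: "c k \<noteq> 0" and kn: "k \<le> n"
    using nz LeastI_ex[of "\<lambda>i. c i \<noteq> 0"] Least_le[of "\<lambda>i. c i \<noteq> 0"]
    by (auto simp: k_def n_def intro: order_trans)
  have below: "c i = 0" if "i < k" for i
    using not_less_Least[of i "\<lambda>i. c i \<noteq> 0"] that by (simp add: k_def)
  define s where "s = (\<Sum>i\<in>{Suc k..n}. c i *s (f ^^ (i - Suc k)) x)"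
  interpret fk: Vector_Spaces.linear scale scale "f ^^ k" by (rule linear_funpow[OF f])
  have shift: "(f ^^ k) (f ((f ^^ (i - Suc k)) x)) = (f ^^ i) x" if "Suc k \<le> i" for i
  proof -
    obtain d where "i = Suc k + d" using \<open>Suc k \<le> i\<close> le_Suc_ex by blast
    then show ?thesis by (simp add: funpow_add funpow_swap1)
  qed
  have "(f ^^ k) (f s) = (\<Sum>i\<in>{Suc k..n}. c i *s (f ^^ i) x)"
    unfolding s_def f.sum f.scale fk.sum fk.scale by (rule sum.cong) (simp_all add: shift)
  then have "(f ^^ k) (c k *s x + f s) = (\<Sum>i\<in>{k..n}. c i *s (f ^^ i) x)"
    using kn by (simp add: fk.add fk.scale sum.atLeast_Suc_atMost)
  also have "\<dots> = (\<Sum>i\<le>n. c i *s (f ^^ i) x)"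
    by (rule sum.mono_neutral_left) (auto simp: below)
  finally have "(f ^^ k) (c k *s x + f s) = 0" using rel by (simp add: n_def)
  then have "f (c k *s x + f s) = 0" using funpow_kernel_stable[of f, OF f.zero ker] by blast
  then have "f (inverse (c k) *s (c k *s x + f s)) = 0" by (simp add: f.scale)
  moreover have "x = inverse (c k) *s (c k *s x + f s) + f (- (inverse (c k) *s s))"
    using ck by (simp add: f.neg f.scale scale_right_distrib)
  ultimately show ?thesis by blast
qed

end

locale self_adjoint_frame = vector_space scale
  for scale :: "'a::field \<Rightarrow> 'v::ab_group_add \<Rightarrow> 'v" (infixr "*s" 75) +
  fixes P Q :: "'v \<Rightarrow> 'v" and S :: "'v set" and B :: "'v \<Rightarrow> 'v \<Rightarrow> real"
  assumes finite_frame: "finite S"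
    and P_span: "a \<in> span S \<Longrightarrow> P a \<in> span S"
    and Q_span: "a \<in> span S \<Longrightarrow> Q a \<in> span S"
    and B_diff_left: "\<lbrakk>a \<in> span S; b \<in> span S; c \<in> span S\<rbrakk> \<Longrightarrow> B (a - b) c = B a c - B b c"
    and B_sym: "\<lbrakk>a \<in> span S; b \<in> span S\<rbrakk> \<Longrightarrow> B a b = B b a"
    and P_self_adjoint: "\<lbrakk>a \<in> span S; b \<in> span S\<rbrakk> \<Longrightarrow> B (P a) b = B a (P b)"
    and Q_self_adjoint: "\<lbrakk>a \<in> span S; b \<in> span S\<rbrakk> \<Longrightarrow> B (Q a) b = B a (Q b)"
    and B_anisotropic: "\<lbrakk>a \<in> span S; B a a = 0\<rbrakk> \<Longrightarrow> a = 0"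
begin

lemma B_diff_right: "\<lbrakk>a \<in> span S; b \<in> span S; c \<in> span S\<rbrakk> \<Longrightarrow> B a (b - c) = B a b - B a c"
  by (metis B_diff_left B_sym span_diff)

lemma B_zero_right: "a \<in> span S \<Longrightarrow> B a 0 = 0"
  using B_diff_right[of a 0 0] by (simp add: span_zero)

lemma self_adjoint_kernel_square:
  assumes f_span: "\<And>a. a \<in> span S \<Longrightarrow> f a \<in> span S"
    and f_adj: "\<And>a b. \<lbrakk>a \<in> span S; b \<in> span S\<rbrakk> \<Longrightarrow> B (f a) b = B a (f b)"
    and w: "w \<in> span S" and "f (f w) = 0"
  shows "f w = 0"
proof -
  have "B (f w) (f w) = B w (f (f w))" using f_adj[OF w f_span[OF w]] .
  also have "\<dots> = 0" using \<open>f (f w) = 0\<close> B_zero_right[OF w] by simp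
  finally show ?thesis using B_anisotropic[OF f_span[OF w]] by blast
qed

end

locale locally_self_adjoint_projections = vector_space scale
  for scale :: "'a::field \<Rightarrow> 'v::ab_group_add \<Rightarrow> 'v" (infixr "*s" 75) +
  fixes P Q :: "'v \<Rightarrow> 'v"
  assumes linear_P: "Vector_Spaces.linear scale scale P"
    and linear_Q: "Vector_Spaces.linear scale scale Q"
    and P_idem: "P (P x) = P x" and Q_idem: "Q (Q x) = Q x"
    and local_frame: "\<exists>S B. self_adjoint_frame scale P Q S B \<and> x \<in> span S"
begin

sublocale P: Vector_Spaces.linear scale scale P by (rule linear_P)
sublocale Q: Vector_Spaces.linear scale scale Q by (rule linear_Q)

definition proj_diff :: "'v \<Rightarrow> 'v" where "proj_diff x = P x - Q x"

text \<open>\<open>1 - (P - Q)\<^sup>2 = PQP + (1 - P)(1 - Q)(1 - P)\<close>, the ``cosine squared'' of the pair \<open>P, Q\<close>.\<close>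
definition cos_sq :: "'v \<Rightarrow> 'v" where "cos_sq x = x - proj_diff (proj_diff x)"

lemma cos_sq_expand: "cos_sq x = x - P x - Q x + P (Q x) + Q (P x)"
  by (simp add: cos_sq_def proj_diff_def P.diff Q.diff P_idem Q_idem algebra_simps)

lemma linear_cos_sq: "Vector_Spaces.linear scale scale cos_sq"
  unfolding linear_iff_module_hom module_hom_iff cos_sq_expand
  by (simp add: module_axioms P.add Q.add P.scale Q.scale scale_right_diff_distrib
      scale_right_distrib)

sublocale C: Vector_Spaces.linear scale scale cos_sq by (rule linear_cos_sq)

lemma cos_sq_P: "cos_sq (P x) = P (cos_sq x)"
  by (simp add: cos_sq_expand P.add P.diff P_idem)

lemma cos_sq_Q: "cos_sq (Q x) = Q (cos_sq x)"
  by (simp add: cos_sq_expand Q.add Q.diff Q_idem)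

lemma cos_sq_PQ: "cos_sq (P (Q x)) = P (Q (P (Q x)))"
  by (simp add: cos_sq_expand P_idem Q_idem)

lemma Q_cos_sq: "Q (cos_sq x) = Q (P (Q x))"
  by (simp add: cos_sq_expand Q.add Q.diff Q_idem)

lemma cos_sq_commute:
  assumes "\<And>x y. T (x + y) = T x + T y" and "\<And>x. T (P x) = P (T x)" and "\<And>x. T (Q x) = Q (T x)"
  shows "T (cos_sq x) = cos_sq (T x)"
proof -
  have "T (x - y) = T x - T y" for x y using assms(1)[of "x - y" y] by (simp add: algebra_simps)
  then show ?thesis by (simp add: cos_sq_expand assms)
qed

context
  fixes S B assumes frame: "self_adjoint_frame scale P Q S B"
begin

interpretation F: self_adjoint_frame scale P Q S B by (rule frame)

lemma proj_diff_span: "a \<in> span S \<Longrightarrow> proj_diff a \<in> span S"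
  by (simp add: proj_diff_def span_diff F.P_span F.Q_span)

lemma cos_sq_span: "a \<in> span S \<Longrightarrow> cos_sq a \<in> span S"
  by (simp add: cos_sq_def span_diff proj_diff_span)

lemma proj_diff_self_adjoint:
  "\<lbrakk>a \<in> span S; b \<in> span S\<rbrakk> \<Longrightarrow> B (proj_diff a) b = B a (proj_diff b)"
  by (simp add: proj_diff_def F.B_diff_left F.B_diff_right F.P_span F.Q_span
      F.P_self_adjoint F.Q_self_adjoint)

lemma cos_sq_self_adjoint:
  assumes "a \<in> span S" "b \<in> span S"
  shows "B (cos_sq a) b = B a (cos_sq b)"
  using assms
  by (simp add: cos_sq_def F.B_diff_left F.B_diff_right proj_diff_span proj_diff_self_adjoint)

end

lemma cos_sq_kernel_square:
  assumes "cos_sq (cos_sq w) = 0"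
  shows "cos_sq w = 0"
proof -
  obtain S B where frame: "self_adjoint_frame scale P Q S B" and w: "w \<in> span S"
    using local_frame by blast
  interpret F: self_adjoint_frame scale P Q S B by (rule frame)
  show ?thesis
    using F.self_adjoint_kernel_square[of cos_sq, OF _ _ w assms] cos_sq_span[OF frame]
      cos_sq_self_adjoint[OF frame] by blast
qed

lemma PQ_vanishes_on_cos_sq_kernel:
  assumes "cos_sq x = 0"
  shows "P (Q x) = 0"
proof -
  obtain S B where frame: "self_adjoint_frame scale P Q S B" and x: "x \<in> span S"
    using local_frame by blast
  interpret F: self_adjoint_frame scale P Q S B by (rule frame)
  have Qx: "Q x \<in> span S" and PQx: "P (Q x) \<in> span S" using x by (simp_all add: F.P_span F.Q_span)
  have "B (P (Q x)) (P (Q x)) = B (Q x) (P (Q x))" using F.P_self_adjoint[OF Qx PQx] by (simp add: P_idem)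
  also have "\<dots> = B x (Q (P (Q x)))" using F.Q_self_adjoint[OF x PQx] .
  also have "\<dots> = 0" using assms Q_cos_sq[of x] F.B_zero_right[OF x] by simp
  finally show ?thesis using F.B_anisotropic[OF PQx] by blast
qed

lemma cos_sq_fitting_decomposition: "\<exists>a b. cos_sq a = 0 \<and> x = a + cos_sq b"
proof -
  obtain S B where frame: "self_adjoint_frame scale P Q S B" and x: "x \<in> span S"
    using local_frame by blast
  show ?thesis
    by (rule fitting_decomposition[OF linear_cos_sq self_adjoint_frame.finite_frame[OF frame] _ x
          cos_sq_kernel_square]) (use cos_sq_span[OF frame] in blast)
qed

definition kernel_part :: "'v \<Rightarrow> 'v" where
  "kernel_part x = (SOME a. cos_sq a = 0 \<and> (\<exists>b. x = a + cos_sq b))"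

lemma kernel_part: "cos_sq (kernel_part x) = 0" "\<exists>b. x = kernel_part x + cos_sq b"
  using someI_ex[OF cos_sq_fitting_decomposition[of x]] by (simp_all add: kernel_part_def)

lemma kernel_part_unique:
  assumes "cos_sq a = 0" and "x = a + cos_sq b"
  shows "kernel_part x = a"
proof -
  obtain b' where b': "x = kernel_part x + cos_sq b'" using kernel_part by blast
  have "a - kernel_part x = cos_sq (b' - b)" using assms(2) b' by (simp add: C.diff algebra_simps)
  moreover have "cos_sq (a - kernel_part x) = 0" using assms(1) kernel_part by (simp add: C.diff)
  ultimately have "cos_sq (b' - b) = 0" using cos_sq_kernel_square by simp
  then show ?thesis using \<open>a - kernel_part x = cos_sq (b' - b)\<close> by simp
qed

lemma kernel_part_commute:
  assumes T_add: "\<And>x y. T (x + y) = T x + T y" and T_cos_sq: "\<And>x. T (cos_sq x) = cos_sq (T x)"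
  shows "kernel_part (T x) = T (kernel_part x)"
proof -
  obtain b where b: "x = kernel_part x + cos_sq b" using kernel_part by blast
  have "T 0 = 0" using T_add[of 0 0] by simp
  then have "cos_sq (T (kernel_part x)) = 0" using T_cos_sq kernel_part by metis
  moreover have "T x = T (kernel_part x) + cos_sq (T b)" using b T_add T_cos_sq by metis
  ultimately show ?thesis by (rule kernel_part_unique)
qed

lemma linear_kernel_part: "Vector_Spaces.linear scale scale kernel_part"
proof -
  have "kernel_part (x + y) = kernel_part x + kernel_part y" for x y
  proof -
    obtain b c where "x = kernel_part x + cos_sq b" "y = kernel_part y + cos_sq c"
      using kernel_part by blast
    then have "x + y = kernel_part x + kernel_part y + cos_sq (b + c)"
      by (simp add: C.add algebra_simps)
    moreover have "cos_sq (kernel_part x + kernel_part y) = 0" using kernel_part by (simp add: C.add)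
    ultimately show ?thesis using kernel_part_unique by blast
  qed
  moreover have "kernel_part (c *s x) = c *s kernel_part x" for c x
    by (rule kernel_part_commute) (simp_all add: scale_right_distrib C.scale)
  ultimately show ?thesis by (simp add: linear_iff_module_hom module_hom_iff module_axioms)
qed

sublocale K: Vector_Spaces.linear scale scale kernel_part by (rule linear_kernel_part)

definition z_op :: "'v \<Rightarrow> 'v" where "z_op x = cos_sq x + kernel_part x"

lemma linear_z_op: "Vector_Spaces.linear scale scale z_op"
  unfolding linear_iff_module_hom module_hom_iff z_op_def
  by (simp add: module_axioms C.add K.add C.scale K.scale scale_right_distrib)

sublocale Z: Vector_Spaces.linear scale scale z_op by (rule linear_z_op)

lemma z_op_commute:
  assumes "\<And>x y. T (x + y) = T x + T y" and "\<And>x. T (cos_sq x) = cos_sq (T x)"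
  shows "T (z_op x) = z_op (T x)"
  by (simp add: z_op_def assms kernel_part_commute)

lemma z_op_eq_0_iff: "z_op w = 0 \<longleftrightarrow> w = 0"
proof
  assume "z_op w = 0"
  then have cw: "cos_sq w = - kernel_part w" by (simp add: z_op_def eq_neg_iff_add_eq_0)
  then have "cos_sq (cos_sq w) = 0" using kernel_part by (simp add: C.neg)
  then have "cos_sq w = 0" by (rule cos_sq_kernel_square)
  then have "kernel_part w = 0" using cw by simp
  moreover obtain b where b: "w = kernel_part w + cos_sq b" using kernel_part by blast
  ultimately have "cos_sq (cos_sq b) = 0" using \<open>cos_sq w = 0\<close> by simp
  then show "w = 0" using b \<open>kernel_part w = 0\<close> cos_sq_kernel_square by simp
qed (simp add: z_op_def)

lemma bij_z_op: "bij z_op"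
proof (rule bijI)
  show "inj z_op" by (simp add: Z.inj_on_iff_eq_0 z_op_eq_0_iff)
  have "y \<in> range z_op" for y
  proof -
    obtain b where b: "y = kernel_part y + cos_sq b" using kernel_part by blast
    obtain c where c: "b = kernel_part b + cos_sq c" using kernel_part by blast
    have "kernel_part (kernel_part y + cos_sq c) = kernel_part y"
      using kernel_part by (intro kernel_part_unique) auto
    moreover have "cos_sq (cos_sq c) = cos_sq b"
      using arg_cong[OF c, of cos_sq] kernel_part(1)[of b] by (simp add: C.add)
    ultimately have "z_op (kernel_part y + cos_sq c) = y"
      using b kernel_part(1)[of y] by (simp add: z_op_def C.add add.commute)
    then show ?thesis by (metis rangeI)
  qed
  then show "surj z_op" by blast
qed

lemma z_op_comm_P: "z_op \<circ> P = P \<circ> z_op"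
  using z_op_commute[of P] by (simp add: fun_eq_iff P.add cos_sq_P)

lemma z_op_comm_Q: "z_op \<circ> Q = Q \<circ> z_op"
  using z_op_commute[of Q] by (simp add: fun_eq_iff Q.add cos_sq_Q)

lemma z_op_comm:
  assumes "\<And>x y. T (x + y) = T x + T y" and "\<And>x. T (P x) = P (T x)" and "\<And>x. T (Q x) = Q (T x)"
  shows "z_op \<circ> T = T \<circ> z_op"
  using z_op_commute[OF assms(1) cos_sq_commute[OF assms]] by (simp add: fun_eq_iff)

lemma z_op_PQ: "z_op (P (Q x)) = P (Q (P (Q x)))"
proof -
  have "kernel_part (P y) = P (kernel_part y)" "kernel_part (Q y) = Q (kernel_part y)" for y
    by (simp_all add: kernel_part_commute P.add Q.add cos_sq_P cos_sq_Q)
  then have "kernel_part (P (Q x)) = 0" using PQ_vanishes_on_cos_sq_kernel kernel_part by simp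
  then show ?thesis by (simp add: z_op_def cos_sq_PQ)
qed

lemma idempotent_inv_z_op_PQ:
  "let p = Hilbert_Choice.inv z_op \<circ> P \<circ> Q in p \<circ> p = p"
proof -
  have "z_op \<circ> (P \<circ> Q) = (P \<circ> Q) \<circ> z_op"
    using z_op_comm_P z_op_comm_Q by (metis comp_assoc)
  moreover have "z_op \<circ> (P \<circ> Q) = (P \<circ> Q) \<circ> (P \<circ> Q)" by (simp add: fun_eq_iff z_op_PQ)
  ultimately have "(Hilbert_Choice.inv z_op \<circ> (P \<circ> Q)) \<circ> (Hilbert_Choice.inv z_op \<circ> (P \<circ> Q))
      = Hilbert_Choice.inv z_op \<circ> (P \<circ> Q)"
    by (rule inv_comp_idempotent[OF bij_z_op])
  then show ?thesis by (simp add: Let_def comp_assoc)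
qed

end

section \<open>Cosets of subgroups\<close>

definition coset_rep :: "'a set \<Rightarrow> 'a" where "coset_rep C = (SOME c. c \<in> C)"

context group
begin

lemma inv_mult_cancel [simp]: "x \<in> carrier G \<Longrightarrow> y \<in> carrier G \<Longrightarrow> inv x \<otimes> (x \<otimes> y) = y"
  by (simp add: m_assoc[symmetric])

lemma mult_inv_cancel [simp]: "x \<in> carrier G \<Longrightarrow> y \<in> carrier G \<Longrightarrow> x \<otimes> (inv x \<otimes> y) = y"
  by (simp add: m_assoc[symmetric])

lemma l_coset_eq_iff:
  assumes J: "subgroup J G" and a: "a \<in> carrier G" and b: "b \<in> carrier G"
  shows "a <# J = b <# J \<longleftrightarrow> inv a \<otimes> b \<in> J"
proof
  assume "a <# J = b <# J"
  then have "b \<in> a <# J" using lcos_self[OF b J] by simp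
  then show "inv a \<otimes> b \<in> J" by (rule subgroup.lcos_module_imp[OF J is_group a])
next
  assume "inv a \<otimes> b \<in> J"
  then have "b \<in> a <# J" by (rule subgroup.lcos_module_rev[OF J is_group a b])
  then show "a <# J = b <# J" by (rule l_repr_independence[OF _ a J])
qed

lemma coset_rep_l_coset:
  assumes J: "subgroup J G" and a: "a \<in> carrier G"
  obtains j where "j \<in> J" and "coset_rep (a <# J) = a \<otimes> j"
proof -
  have "coset_rep (a <# J) \<in> a <# J"
    unfolding coset_rep_def using lcos_self[OF a J] by (rule someI)
  then show thesis using that by (auto simp: l_coset_def)
qed

lemma coset_rep_mem:
  assumes J: "subgroup J G" and H: "subgroup H G" and "J \<subseteq> H" and C: "C \<in> (\<lambda>h. h <# J) ` H"
  shows "coset_rep C \<in> H" and "coset_rep C <# J = C"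
proof -
  obtain h where h: "h \<in> H" "C = h <# J" using C by blast
  have hG: "h \<in> carrier G" using subgroup.mem_carrier[OF H h(1)] .
  obtain j where j: "j \<in> J" "coset_rep C = h \<otimes> j" using coset_rep_l_coset[OF J hG] h(2) by blast
  show "coset_rep C \<in> H" using j h(1) \<open>J \<subseteq> H\<close> subgroup.m_closed[OF H] by auto
  have "coset_rep C \<in> h <# J" using j by (auto simp: l_coset_def)
  then show "coset_rep C <# J = C" using l_repr_independence[OF _ hG J] h(2) by simp
qed

lemma bij_betw_mult_left:
  assumes "subgroup H G" and "u \<in> H"
  shows "bij_betw (\<lambda>a. u \<otimes> a) H H"
  by (rule bij_betw_byWitness[where f' = "\<lambda>a. inv u \<otimes> a"])
    (use assms in \<open>auto simp: subgroup.m_closed subgroup.m_inv_closed subgroup.mem_carrier\<close>)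

lemma bij_betw_mult_right:
  assumes "subgroup H G" and "u \<in> H"
  shows "bij_betw (\<lambda>a. a \<otimes> u) H H"
  by (rule bij_betw_byWitness[where f' = "\<lambda>a. a \<otimes> inv u"])
    (use assms in \<open>auto simp: subgroup.m_closed subgroup.m_inv_closed subgroup.mem_carrier m_assoc\<close>)

lemma bij_betw_inv:
  assumes "subgroup H G"
  shows "bij_betw (\<lambda>a. inv a) H H"
  by (rule bij_betw_byWitness[where f' = "\<lambda>a. inv a"])
    (use assms in \<open>auto simp: subgroup.m_inv_closed subgroup.mem_carrier\<close>)

lemma bij_betw_l_cosets_induced:
  assumes J: "subgroup J G" and H: "subgroup H G" and JH: "J \<subseteq> H"
    and f: "bij_betw f H H"
    and f_J: "\<And>a b. a \<in> H \<Longrightarrow> b \<in> H \<Longrightarrow> inv (f a) \<otimes> f b \<in> J \<longleftrightarrow> inv a \<otimes> b \<in> J"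
  shows "bij_betw (\<lambda>C. f (coset_rep C) <# J) ((\<lambda>h. h <# J) ` H) ((\<lambda>h. h <# J) ` H)"
proof -
  let ?cosets = "(\<lambda>h. h <# J) ` H" and ?F = "\<lambda>C. f (coset_rep C) <# J"
  have HG: "a \<in> H \<Longrightarrow> a \<in> carrier G" for a by (rule subgroup.mem_carrier[OF H])
  have fH: "a \<in> H \<Longrightarrow> f a \<in> H" for a using f by (auto simp: bij_betw_def)
  have rep_H: "C \<in> ?cosets \<Longrightarrow> coset_rep C \<in> H" for C by (rule coset_rep_mem(1)[OF J H JH])
  have same_coset: "a <# J = b <# J \<longleftrightarrow> f a <# J = f b <# J" if "a \<in> H" "b \<in> H" for a b
    using that f_J l_coset_eq_iff[OF J] HG fH by simp
  have F_coset: "?F (a <# J) = f a <# J" if a: "a \<in> H" for a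
  proof -
    obtain j where j: "j \<in> J" "coset_rep (a <# J) = a \<otimes> j" using coset_rep_l_coset[OF J HG[OF a]] .
    have "a \<otimes> j \<in> H" using a j(1) JH subgroup.m_closed[OF H] by blast
    moreover have "a \<otimes> j <# J = a <# J"
      using j coset_rep_mem(2)[OF J H JH, of "a <# J"] a by simp
    ultimately show ?thesis using same_coset[OF a, of "a \<otimes> j"] j by simp
  qed
  show ?thesis
  proof (rule bij_betw_imageI)
    show "inj_on ?F ?cosets"
    proof (rule inj_onI)
      fix C C' assume C: "C \<in> ?cosets" and C': "C' \<in> ?cosets" and "?F C = ?F C'"
      then have "coset_rep C <# J = coset_rep C' <# J"
        using same_coset[OF rep_H[OF C] rep_H[OF C']] by simp
      then show "C = C'" using coset_rep_mem(2)[OF J H JH] C C' by metis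
    qed
    show "?F ` ?cosets = ?cosets"
    proof
      show "?F ` ?cosets \<subseteq> ?cosets" using fH rep_H by blast
      have "h <# J \<in> ?F ` ?cosets" if h: "h \<in> H" for h
      proof -
        obtain a where a: "a \<in> H" "h = f a" using f h by (auto simp: bij_betw_def)
        then have "?F (a <# J) = h <# J" by (simp add: F_coset)
        then show ?thesis using a(1) by (metis imageI)
      qed
      then show "?cosets \<subseteq> ?F ` ?cosets" by blast
    qed
  qed
qed

lemma sum_l_cosets_reindex:
  fixes \<phi> :: "'a \<Rightarrow> 'c::comm_monoid_add"
  assumes J: "subgroup J G" and H: "subgroup H G" and JH: "J \<subseteq> H"
    and \<phi>: "\<And>a j. a \<in> H \<Longrightarrow> j \<in> J \<Longrightarrow> \<phi> (a \<otimes> j) = \<phi> a"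
    and f: "bij_betw f H H"
    and f_J: "\<And>a b. a \<in> H \<Longrightarrow> b \<in> H \<Longrightarrow> inv (f a) \<otimes> f b \<in> J \<longleftrightarrow> inv a \<otimes> b \<in> J"
  shows "(\<Sum>C\<in>(\<lambda>h. h <# J) ` H. \<phi> (f (coset_rep C))) = (\<Sum>C\<in>(\<lambda>h. h <# J) ` H. \<phi> (coset_rep C))"
proof -
  let ?cosets = "(\<lambda>h. h <# J) ` H"
  have \<phi>_rep: "\<phi> (coset_rep (a <# J)) = \<phi> a" if "a \<in> H" for a
    using coset_rep_l_coset[OF J subgroup.mem_carrier[OF H that]] \<phi>[OF that] by metis
  have "\<phi> (f (coset_rep C)) = \<phi> (coset_rep (f (coset_rep C) <# J))" if "C \<in> ?cosets" for C
  proof -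
    have "f (coset_rep C) \<in> H" using f coset_rep_mem(1)[OF J H JH that] by (auto simp: bij_betw_def)
    then show ?thesis by (rule \<phi>_rep[symmetric])
  qed
  then have "(\<Sum>C\<in>?cosets. \<phi> (f (coset_rep C))) = (\<Sum>C\<in>?cosets. \<phi> (coset_rep (f (coset_rep C) <# J)))"
    by (rule sum.cong[OF refl])
  also have "\<dots> = (\<Sum>C\<in>?cosets. \<phi> (coset_rep C))"
    by (rule sum.reindex_bij_betw[OF bij_betw_l_cosets_induced[OF J H JH f f_J]])
  finally show ?thesis .
qed

lemma normalises_conj_iff:
  assumes "normalises G L U" and "U \<subseteq> carrier G" and "l \<in> L" and "l \<in> carrier G"
    and "x \<in> carrier G"
  shows "l \<otimes> x \<otimes> inv l \<in> U \<longleftrightarrow> x \<in> U"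
proof
  assume "l \<otimes> x \<otimes> inv l \<in> U"
  then obtain u where "u \<in> U" "l \<otimes> x \<otimes> inv l = l \<otimes> u \<otimes> inv l"
    using assms(1,3) unfolding normalises_def by (metis (no_types, lifting) imageE)
  then show "x \<in> U" using assms(2,4,5) by (simp add: subsetD)
qed (use assms(1,3) in \<open>auto simp: normalises_def\<close>)

lemma normalisesI:
  assumes "L \<subseteq> carrier G" and "U \<subseteq> carrier G" and "\<And>l. l \<in> L \<Longrightarrow> inv l \<in> L"
    and "\<And>l u. l \<in> L \<Longrightarrow> u \<in> U \<Longrightarrow> l \<otimes> u \<otimes> inv l \<in> U"
  shows "normalises G L U"
  unfolding normalises_def
proof (intro ballI equalityI subsetI)
  fix l u assume l: "l \<in> L" and u: "u \<in> U"
  have lG: "l \<in> carrier G" and uG: "u \<in> carrier G" using assms(1,2) l u by auto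
  have "u = l \<otimes> (inv l \<otimes> u \<otimes> inv (inv l)) \<otimes> inv l"
    using lG uG by (simp add: m_assoc)
  moreover have "inv l \<otimes> u \<otimes> inv (inv l) \<in> U" using assms(3,4) l u by blast
  ultimately show "u \<in> (\<lambda>u. l \<otimes> u \<otimes> inv l) ` U" by blast
qed (use assms(4) in blast)

lemma normalises_self:
  assumes H: "subgroup H G"
  shows "normalises G H H"
proof (rule normalisesI)
  show "l \<otimes> u \<otimes> inv l \<in> H" if "l \<in> H" "u \<in> H" for l u
    using that by (simp add: subgroup.m_closed[OF H] subgroup.m_inv_closed[OF H])
qed (use subgroup.subset[OF H] subgroup.m_inv_closed[OF H] in auto)

lemma finite_l_cosets_Int:
  assumes H: "subgroup H G" and K: "subgroup K G" and fin: "finite ((\<lambda>a. a <# K) ` carrier G)"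
  shows "finite ((\<lambda>h. h <# (H \<inter> K)) ` H)"
proof (rule inj_on_finite[OF _ _ fin])
  let ?J = "H \<inter> K"
  have J: "subgroup ?J G" by (rule subgroups_Inter_pair[OF H K])
  have HG: "a \<in> H \<Longrightarrow> a \<in> carrier G" for a by (rule subgroup.mem_carrier[OF H])
  have rep: "coset_rep C \<in> H" "coset_rep C <# ?J = C" if "C \<in> (\<lambda>h. h <# ?J) ` H" for C
    using coset_rep_mem[OF J H _ that] by auto
  show "inj_on (\<lambda>C. coset_rep C <# K) ((\<lambda>h. h <# ?J) ` H)"
  proof (rule inj_onI)
    fix C C' assume C: "C \<in> (\<lambda>h. h <# ?J) ` H" and C': "C' \<in> (\<lambda>h. h <# ?J) ` H"
      and "coset_rep C <# K = coset_rep C' <# K"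
    then have "inv (coset_rep C) \<otimes> coset_rep C' \<in> ?J"
      using l_coset_eq_iff[OF K] rep subgroup.m_closed[OF H] subgroup.m_inv_closed[OF H] HG
      by (metis IntI)
    then show "C = C'" using l_coset_eq_iff[OF J] rep[OF C] rep[OF C'] HG by metis
  qed
  show "(\<lambda>C. coset_rep C <# K) ` (\<lambda>h. h <# ?J) ` H \<subseteq> (\<lambda>a. a <# K) ` carrier G"
    using rep HG by blast
qed

lemma finite_l_cosets_mono:
  assumes J: "subgroup J G" and K: "subgroup K G" and H: "subgroup H G" and "J \<subseteq> K" "K \<subseteq> H"
    and fin: "finite ((\<lambda>h. h <# J) ` H)"
  shows "finite ((\<lambda>h. h <# K) ` H)"
proof (rule finite_subset[OF _ finite_imageI[OF fin]])
  show "(\<lambda>h. h <# K) ` H \<subseteq> (\<lambda>C. coset_rep C <# K) ` (\<lambda>h. h <# J) ` H"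
  proof
    fix D assume "D \<in> (\<lambda>h. h <# K) ` H"
    then obtain h where h: "h \<in> H" "D = h <# K" by blast
    have hG: "h \<in> carrier G" by (rule subgroup.mem_carrier[OF H h(1)])
    obtain j where j: "j \<in> J" "coset_rep (h <# J) = h \<otimes> j" by (rule coset_rep_l_coset[OF J hG])
    have "coset_rep (h <# J) \<in> h <# K" using j \<open>J \<subseteq> K\<close> by (auto simp: l_coset_def)
    then have "D = coset_rep (h <# J) <# K" using l_repr_independence[OF _ hG K] h(2) by simp
    then show "D \<in> (\<lambda>C. coset_rep C <# K) ` (\<lambda>h. h <# J) ` H" using h(1) by blast
  qed
qed

end

section \<open>Open subgroups of compact groups\<close>

locale profinite = group G for G (structure) +
  fixes T :: "'a topology"
  assumes profinite_group: "profinite_group G T"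
begin

lemma topspace_eq: "topspace T = carrier G"
  using profinite_group by (simp add: profinite_group_def)

lemma compact_space: "compact_space T"
  using profinite_group by (simp add: profinite_group_def)

lemma continuous_map_left_mult:
  assumes a: "a \<in> carrier G"
  shows "continuous_map T T (\<lambda>x. a \<otimes> x)"
proof -
  have mult: "continuous_map (prod_topology T T) T (\<lambda>(x, y). x \<otimes> y)"
    using profinite_group by (simp add: profinite_group_def)
  have "continuous_map T (prod_topology T T) (\<lambda>x. (a, x))"
    by (rule continuous_map_pairedI) (simp_all add: a topspace_eq)
  from continuous_map_compose[OF this mult] show ?thesis by (simp add: comp_def)
qed

lemma openin_l_coset:
  assumes K: "K \<subseteq> carrier G" "openin T K" and a: "a \<in> carrier G"
  shows "openin T (a <# K)"
proof -
  have "a <# K = {x \<in> topspace T. inv a \<otimes> x \<in> K}"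
  proof (intro equalityI subsetI)
    fix x assume "x \<in> a <# K"
    then obtain k where "k \<in> K" "x = a \<otimes> k" by (auto simp: l_coset_def)
    then show "x \<in> {x \<in> topspace T. inv a \<otimes> x \<in> K}"
      using K(1) a by (auto simp: topspace_eq)
  next
    fix x assume x: "x \<in> {x \<in> topspace T. inv a \<otimes> x \<in> K}"
    then have "x = a \<otimes> (inv a \<otimes> x)" using a by (simp add: topspace_eq)
    then show "x \<in> a <# K" using x unfolding l_coset_def by blast
  qed
  then show ?thesis
    using openin_continuous_map_preimage[OF continuous_map_left_mult[OF inv_closed[OF a]] K(2)]
    by simp
qed

lemma finite_l_cosets_openin:
  assumes K: "subgroup K G" "openin T K"
  shows "finite ((\<lambda>a. a <# K) ` carrier G)"
proof -
  let ?cosets = "(\<lambda>a. a <# K) ` carrier G"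
  have "\<forall>C\<in>?cosets. openin T C" using openin_l_coset[OF subgroup.subset[OF K(1)] K(2)] by blast
  moreover have "topspace T \<subseteq> \<Union>?cosets" using lcos_self[OF _ K(1)] by (auto simp: topspace_eq)
  ultimately have "\<exists>F. finite F \<and> F \<subseteq> ?cosets \<and> topspace T \<subseteq> \<Union>F"
    using compact_space unfolding compact_space_alt by blast
  then obtain F where F: "finite F" "F \<subseteq> ?cosets" "topspace T \<subseteq> \<Union>F" by blast
  have "?cosets \<subseteq> F"
  proof
    fix C assume "C \<in> ?cosets"
    then obtain a where a: "a \<in> carrier G" "C = a <# K" by blast
    then obtain D where D: "D \<in> F" "a \<in> D" using F(3) by (auto simp: topspace_eq)
    obtain b where b: "b \<in> carrier G" "D = b <# K" using D(1) F(2) by blast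
    have "b <# K = a <# K" using l_repr_independence[OF _ b(1) K(1)] D(2) b(2) by simp
    then show "C \<in> F" using a(2) b(2) D(1) by simp
  qed
  then show ?thesis using F(1) by (rule finite_subset)
qed

text \<open>\<open>N\<close> is the union of the open translates \<open>n <# K\<close>.\<close>
lemma openin_subgroup:
  assumes N: "subgroup N G" and "K \<subseteq> N" and K: "openin T K" and "\<one> \<in> K"
  shows "openin T N"
proof -
  have KG: "K \<subseteq> carrier G" using \<open>K \<subseteq> N\<close> subgroup.subset[OF N] by blast
  have "N = (\<Union>n\<in>N. n <# K)"
  proof (intro equalityI subsetI)
    fix x assume "x \<in> N"
    then have "x \<in> x <# K" using \<open>\<one> \<in> K\<close> subgroup.mem_carrier[OF N]
      by (force simp: l_coset_def)
    then show "x \<in> (\<Union>n\<in>N. n <# K)" using \<open>x \<in> N\<close> by blast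
  qed (use \<open>K \<subseteq> N\<close> subgroup.m_closed[OF N] in \<open>auto simp: l_coset_def\<close>)
  moreover have "openin T (\<Union>n\<in>N. n <# K)"
    using openin_l_coset[OF KG K] subgroup.mem_carrier[OF N] by (intro openin_Union) blast
  ultimately show ?thesis by simp
qed

end

section \<open>Averages over cosets in smooth representations\<close>

locale smooth_representation = profinite G T
  for G :: "('g, 'b) monoid_scheme" (structure) and T +
  fixes scale :: "complex \<Rightarrow> 'v::ab_group_add \<Rightarrow> 'v" (infixr "*s" 75) and \<rho> :: "'g \<Rightarrow> 'v \<Rightarrow> 'v"
  assumes smooth_rep: "smooth_rep G T scale \<rho>"

sublocale smooth_representation \<subseteq> vector_space scale
  using smooth_rep by (simp add: smooth_rep_def)

context smooth_representation
begin

lemma module_hom_rep: "g \<in> carrier G \<Longrightarrow> module_hom scale scale (\<rho> g)"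
  using smooth_rep by (simp add: smooth_rep_def linear_iff_module_hom)

lemmas rep_add = module_hom.add[OF module_hom_rep]
  and rep_diff = module_hom.diff[OF module_hom_rep]
  and rep_zero = module_hom.zero[OF module_hom_rep]
  and rep_scale = module_hom.scale[OF module_hom_rep]
  and rep_sum = module_hom.sum[OF module_hom_rep]

lemma rep_one: "\<rho> \<one> x = x"
  using smooth_rep by (simp add: smooth_rep_def)

lemma rep_mult: "g \<in> carrier G \<Longrightarrow> h \<in> carrier G \<Longrightarrow> \<rho> (g \<otimes> h) x = \<rho> g (\<rho> h x)"
  using smooth_rep by (simp add: smooth_rep_def)

lemma rep_inv_cancel: "g \<in> carrier G \<Longrightarrow> \<rho> (inv g) (\<rho> g x) = x"
  using rep_mult[of "inv g" g x] by (simp add: rep_one)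

lemma smooth_vector: "\<exists>K. subgroup K G \<and> openin T K \<and> (\<forall>k\<in>K. \<rho> k m = m)"
  using smooth_rep by (simp add: smooth_rep_def)

lemma subgroup_stab: "subgroup (stab G \<rho> m) G"
proof (rule subgroupI)
  show "stab G \<rho> m \<subseteq> carrier G" by (auto simp: stab_def)
  show "stab G \<rho> m \<noteq> {}" using rep_one by (auto simp: stab_def)
  fix a b assume "a \<in> stab G \<rho> m" "b \<in> stab G \<rho> m"
  then show "inv a \<in> stab G \<rho> m" and "a \<otimes> b \<in> stab G \<rho> m"
    using rep_inv_cancel[of a m] by (auto simp: stab_def rep_mult)
qed

definition coset_avg :: "'g set \<Rightarrow> 'g set \<Rightarrow> 'v \<Rightarrow> 'v" where
  "coset_avg H J m =
     (1 / of_nat (card ((\<lambda>h. h <# J) ` H))) *s (\<Sum>C\<in>(\<lambda>h. h <# J) ` H. \<rho> (coset_rep C) m)"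

lemma haar_proj_eq: "haar_proj G scale \<rho> H m = coset_avg H (H \<inter> stab G \<rho> m) m"
  by (simp add: haar_proj_def coset_avg_def coset_rep_def Let_def)

context
  fixes H J assumes H: "subgroup H G" and J: "subgroup J G" and JH: "J \<subseteq> H"
begin

lemma coset_rep_mem_carrier: "C \<in> (\<lambda>h. h <# J) ` H \<Longrightarrow> coset_rep C \<in> carrier G"
  using coset_rep_mem(1)[OF J H JH] subgroup.mem_carrier[OF H] by blast

lemma linear_coset_avg: "Vector_Spaces.linear scale scale (coset_avg H J)"
  unfolding linear_iff_module_hom module_hom_iff
  by (simp add: module_axioms coset_avg_def rep_add rep_scale coset_rep_mem_carrier sum.distrib
      scale_right_distrib scale_sum_right scale_left_commute cong: sum.cong)

lemma coset_avg_fixed: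
  assumes "finite ((\<lambda>h. h <# J) ` H)" and "\<And>u. u \<in> H \<Longrightarrow> \<rho> u v = v"
  shows "coset_avg H J v = v"
proof -
  have "(\<lambda>h. h <# J) ` H \<noteq> {}" using subgroup.one_closed[OF H] by blast
  then have "card ((\<lambda>h. h <# J) ` H) \<noteq> 0" using assms(1) by simp
  moreover have "(\<Sum>C\<in>(\<lambda>h. h <# J) ` H. \<rho> (coset_rep C) v) = of_nat (card ((\<lambda>h. h <# J) ` H)) *s v"
    using assms(2) coset_rep_mem(1)[OF J H JH] by (simp add: sum_constant_scale)
  ultimately show ?thesis by (simp add: coset_avg_def)
qed

lemma coset_avg_invariant:
  assumes m: "J \<subseteq> stab G \<rho> m" and u: "u \<in> H"
  shows "\<rho> u (coset_avg H J m) = coset_avg H J m"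
proof -
  have uG: "u \<in> carrier G" using subgroup.mem_carrier[OF H u] .
  have HG: "a \<in> H \<Longrightarrow> a \<in> carrier G" for a by (rule subgroup.mem_carrier[OF H])
  have "(\<Sum>C\<in>(\<lambda>h. h <# J) ` H. \<rho> (u \<otimes> coset_rep C) m)
      = (\<Sum>C\<in>(\<lambda>h. h <# J) ` H. \<rho> (coset_rep C) m)"
  proof (rule sum_l_cosets_reindex[OF J H JH _ bij_betw_mult_left[OF H u], where \<phi> = "\<lambda>a. \<rho> a m"])
    show "\<rho> (a \<otimes> j) m = \<rho> a m" if "a \<in> H" "j \<in> J" for a j
      using that m HG by (auto simp: stab_def rep_mult)
    show "inv (u \<otimes> a) \<otimes> (u \<otimes> b) \<in> J \<longleftrightarrow> inv a \<otimes> b \<in> J" if "a \<in> H" "b \<in> H" for a b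
      using that HG uG by (simp add: inv_mult_group m_assoc)
  qed
  then show ?thesis
    by (simp add: coset_avg_def rep_scale[OF uG] rep_sum[OF uG] rep_mult[OF uG] coset_rep_mem_carrier)
qed

lemma coset_avg_translate:
  assumes "normalises G H J" and m: "J \<subseteq> stab G \<rho> m" and u: "u \<in> H"
  shows "coset_avg H J (\<rho> u m) = coset_avg H J m"
proof -
  have uG: "u \<in> carrier G" using subgroup.mem_carrier[OF H u] .
  have HG: "a \<in> H \<Longrightarrow> a \<in> carrier G" for a by (rule subgroup.mem_carrier[OF H])
  have conj_iff: "inv u \<otimes> x \<otimes> inv (inv u) \<in> J \<longleftrightarrow> x \<in> J" if "x \<in> carrier G" for x
    using normalises_conj_iff[OF assms(1) subgroup.subset[OF J], of "inv u" x]
      subgroup.m_inv_closed[OF H u] uG that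
    by simp
  have "(\<Sum>C\<in>(\<lambda>h. h <# J) ` H. \<rho> (coset_rep C \<otimes> u) m)
      = (\<Sum>C\<in>(\<lambda>h. h <# J) ` H. \<rho> (coset_rep C) m)"
  proof (rule sum_l_cosets_reindex[OF J H JH _ bij_betw_mult_right[OF H u], where \<phi> = "\<lambda>a. \<rho> a m"])
    show "\<rho> (a \<otimes> j) m = \<rho> a m" if "a \<in> H" "j \<in> J" for a j
      using that m HG by (auto simp: stab_def rep_mult)
    show "inv (a \<otimes> u) \<otimes> (b \<otimes> u) \<in> J \<longleftrightarrow> inv a \<otimes> b \<in> J" if "a \<in> H" "b \<in> H" for a b
      using that HG uG conj_iff[of "inv a \<otimes> b"] by (simp add: inv_mult_group m_assoc)
  qed
  then show ?thesis by (simp add: coset_avg_def rep_mult[OF _ uG] coset_rep_mem_carrier)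
qed

lemma coset_avg_conj:
  assumes L: "subgroup L G" and LH: "normalises G L H" and LJ: "normalises G L J" and l: "l \<in> L"
    and m: "J \<subseteq> stab G \<rho> m"
  shows "coset_avg H J (\<rho> l m) = \<rho> l (coset_avg H J m)"
proof -
  have lG: "l \<in> carrier G" using subgroup.mem_carrier[OF L l] .
  have HG: "a \<in> H \<Longrightarrow> a \<in> carrier G" for a by (rule subgroup.mem_carrier[OF H])
  have conj_J: "l' \<otimes> x \<otimes> inv l' \<in> J \<longleftrightarrow> x \<in> J" if "l' \<in> L" "x \<in> carrier G" for l' x
    using normalises_conj_iff[OF LJ subgroup.subset[OF J]] subgroup.mem_carrier[OF L] that by blast
  have conj_bij: "bij_betw (\<lambda>a. l \<otimes> a \<otimes> inv l) H H"
  proof (rule bij_betw_imageI)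
    show "inj_on (\<lambda>a. l \<otimes> a \<otimes> inv l) H" using lG HG by (intro inj_onI) simp
    show "(\<lambda>a. l \<otimes> a \<otimes> inv l) ` H = H" using LH l by (simp add: normalises_def)
  qed
  have "(\<Sum>C\<in>(\<lambda>h. h <# J) ` H. \<rho> (l \<otimes> coset_rep C \<otimes> inv l) (\<rho> l m))
      = (\<Sum>C\<in>(\<lambda>h. h <# J) ` H. \<rho> (coset_rep C) (\<rho> l m))"
  proof (rule sum_l_cosets_reindex[OF J H JH _ conj_bij, where \<phi> = "\<lambda>a. \<rho> a (\<rho> l m)"])
    fix a assume a: "a \<in> H"
    show "\<rho> (a \<otimes> j) (\<rho> l m) = \<rho> a (\<rho> l m)" if j: "j \<in> J" for j
    proof -
      have jG: "j \<in> carrier G" using subgroup.mem_carrier[OF J j] .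
      have "inv l \<otimes> j \<otimes> inv (inv l) \<in> J" using conj_J subgroup.m_inv_closed[OF L l] j jG by simp
      then have "\<rho> (inv l \<otimes> j \<otimes> l) m = m" using m lG by (auto simp: stab_def)
      moreover have "a \<otimes> j \<otimes> l = a \<otimes> l \<otimes> (inv l \<otimes> j \<otimes> l)" using HG[OF a] jG lG by (simp add: m_assoc)
      ultimately have "\<rho> (a \<otimes> j \<otimes> l) m = \<rho> (a \<otimes> l) m" using HG[OF a] jG lG by (simp add: rep_mult)
      then show ?thesis using HG[OF a] jG lG by (simp add: rep_mult)
    qed
    show "inv (l \<otimes> a \<otimes> inv l) \<otimes> (l \<otimes> b \<otimes> inv l) \<in> J \<longleftrightarrow> inv a \<otimes> b \<in> J" if "b \<in> H" for b
      using conj_J[OF l, of "inv a \<otimes> b"] HG[OF a] HG[OF that] lG by (simp add: inv_mult_group m_assoc)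
  qed
  moreover have "\<rho> (l \<otimes> r \<otimes> inv l) (\<rho> l m) = \<rho> l (\<rho> r m)" if "r \<in> carrier G" for r
    using that lG by (simp add: rep_mult rep_inv_cancel)
  ultimately show ?thesis
    by (simp add: coset_avg_def rep_scale[OF lG] rep_sum[OF lG] coset_rep_mem_carrier)
qed

lemma coset_avg_subspace:
  assumes "subspace W" and "\<And>g w. g \<in> H \<Longrightarrow> w \<in> W \<Longrightarrow> \<rho> g w \<in> W" and "m \<in> W"
  shows "coset_avg H J m \<in> W"
  unfolding coset_avg_def using assms coset_rep_mem(1)[OF J H JH]
  by (intro subspace_scale subspace_sum) auto

end

text \<open>Both sides equal the average over \<open>H/J\<close> of the \<open>H\<close>-invariant vector \<open>haar_proj H m\<close>.\<close>
lemma haar_proj_eq_coset_avg: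
  assumes H: "subgroup H G" and J: "subgroup J G" and JH: "J \<subseteq> H" and "normalises G H J"
    and fin: "finite ((\<lambda>h. h <# J) ` H)" and m: "J \<subseteq> stab G \<rho> m"
  shows "haar_proj G scale \<rho> H m = coset_avg H J m"
proof -
  let ?K = "H \<inter> stab G \<rho> m" and ?p = "haar_proj G scale \<rho> H m"
  have K: "subgroup ?K G" by (rule subgroups_Inter_pair[OF H subgroup_stab])
  have JK: "J \<subseteq> ?K" and KH: "?K \<subseteq> H" using JH m by auto
  have fin_K: "finite ((\<lambda>h. h <# ?K) ` H)" by (rule finite_l_cosets_mono[OF J K H JK KH fin])
  have "(\<lambda>h. h <# ?K) ` H \<noteq> {}" using subgroup.one_closed[OF H] by blast
  then have card_K: "card ((\<lambda>h. h <# ?K) ` H) \<noteq> 0" using fin_K by simp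
  have p: "?p = coset_avg H ?K m" by (rule haar_proj_eq)
  have "coset_avg H J ?p = ?p"
    using coset_avg_fixed[OF H J JH fin] coset_avg_invariant[OF H K KH] p by simp
  moreover have "coset_avg H J ?p = coset_avg H J m"
  proof -
    interpret A: Vector_Spaces.linear scale scale "coset_avg H J" by (rule linear_coset_avg[OF H J JH])
    have "coset_avg H J ?p
        = (1 / of_nat (card ((\<lambda>h. h <# ?K) ` H))) *s
            (\<Sum>C\<in>(\<lambda>h. h <# ?K) ` H. coset_avg H J (\<rho> (coset_rep C) m))"
      unfolding p coset_avg_def[of H ?K m] by (simp add: A.scale A.sum)
    also have "\<dots> = (1 / of_nat (card ((\<lambda>h. h <# ?K) ` H))) *s
            (\<Sum>C\<in>(\<lambda>h. h <# ?K) ` H. coset_avg H J m)"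
      using coset_avg_translate[OF H J JH \<open>normalises G H J\<close> m] coset_rep_mem(1)[OF K H KH] by simp
    also have "\<dots> = coset_avg H J m"
      using card_K by (simp add: sum_constant_scale)
    finally show ?thesis .
  qed
  ultimately show ?thesis by simp
qed

section \<open>Finite orbits and their pointwise stabilisers\<close>

definition orbit :: "'v set \<Rightarrow> 'v set" where
  "orbit X = {\<rho> g x | g x. g \<in> carrier G \<and> x \<in> X}"

definition fixer :: "'v set \<Rightarrow> 'g set" where
  "fixer X = {g \<in> carrier G. \<forall>w\<in>orbit X. \<rho> g w = w}"

lemma subset_orbit: "X \<subseteq> orbit X"
proof
  fix x assume "x \<in> X"
  moreover have "x = \<rho> \<one> x" by (simp add: rep_one)
  ultimately show "x \<in> orbit X" unfolding orbit_def by blast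
qed

lemma orbit_closed:
  assumes g: "g \<in> carrier G" and w: "w \<in> orbit X"
  shows "\<rho> g w \<in> orbit X"
proof -
  obtain h x where "h \<in> carrier G" "x \<in> X" "w = \<rho> h x" using w unfolding orbit_def by blast
  then have "\<rho> g w = \<rho> (g \<otimes> h) x" and "g \<otimes> h \<in> carrier G" using g by (simp_all add: rep_mult)
  then show ?thesis using \<open>x \<in> X\<close> unfolding orbit_def by blast
qed

lemma span_orbit_closed:
  assumes g: "g \<in> carrier G" and a: "a \<in> span (orbit X)"
  shows "\<rho> g a \<in> span (orbit X)"
proof -
  have "span (orbit X) \<subseteq> {x. \<rho> g x \<in> span (orbit X)}"
    using orbit_closed[OF g] span_base
    by (intro span_minimal module_hom.subspace_linear_preimage[OF module_hom_rep[OF g]]) auto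
  then show ?thesis using a by blast
qed

lemma finite_orbit:
  assumes "finite X"
  shows "finite (orbit X)"
proof -
  have "finite {\<rho> g x | g. g \<in> carrier G}" for x
  proof -
    obtain K where K: "subgroup K G" "openin T K" "\<forall>k\<in>K. \<rho> k x = x" using smooth_vector by blast
    have "{\<rho> g x | g. g \<in> carrier G} \<subseteq> (\<lambda>C. \<rho> (coset_rep C) x) ` (\<lambda>a. a <# K) ` carrier G"
    proof
      fix v assume "v \<in> {\<rho> g x | g. g \<in> carrier G}"
      then obtain g where g: "g \<in> carrier G" "v = \<rho> g x" by blast
      obtain k where k: "k \<in> K" "coset_rep (g <# K) = g \<otimes> k" by (rule coset_rep_l_coset[OF K(1) g(1)])
      then have "v = \<rho> (coset_rep (g <# K)) x"
        using g K(3) subgroup.mem_carrier[OF K(1)] by (simp add: rep_mult)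
      then show "v \<in> (\<lambda>C. \<rho> (coset_rep C) x) ` (\<lambda>a. a <# K) ` carrier G" using g(1) by blast
    qed
    then show ?thesis using finite_l_cosets_openin[OF K(1,2)] by (rule finite_surj[rotated])
  qed
  moreover have "orbit X = (\<Union>x\<in>X. {\<rho> g x | g. g \<in> carrier G})" unfolding orbit_def by blast
  ultimately show ?thesis using assms by simp
qed

lemma subgroup_fixer: "subgroup (fixer X) G"
proof (rule subgroupI)
  show "fixer X \<subseteq> carrier G" by (auto simp: fixer_def)
  show "fixer X \<noteq> {}" using rep_one by (auto simp: fixer_def)
  fix a b assume a: "a \<in> fixer X" and b: "b \<in> fixer X"
  then show "a \<otimes> b \<in> fixer X" by (auto simp: fixer_def rep_mult)
  have "\<rho> (inv a) w = w" if "w \<in> orbit X" for w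
    using a that rep_inv_cancel[of a w] by (simp add: fixer_def)
  then show "inv a \<in> fixer X" using a by (simp add: fixer_def)
qed

lemma normalises_fixer: "normalises G (carrier G) (fixer X)"
proof (rule normalisesI)
  fix g n assume g: "g \<in> carrier G" and n: "n \<in> fixer X"
  have "\<rho> (g \<otimes> n \<otimes> inv g) w = w" if "w \<in> orbit X" for w
  proof -
    have "\<rho> n (\<rho> (inv g) w) = \<rho> (inv g) w" using n orbit_closed[OF inv_closed[OF g] that]
      by (simp add: fixer_def)
    then show ?thesis using g n rep_inv_cancel[of "inv g" w] by (simp add: fixer_def rep_mult)
  qed
  then show "g \<otimes> n \<otimes> inv g \<in> fixer X" using g n by (simp add: fixer_def)
qed (auto simp: fixer_def)

lemma fixer_subset_stab:
  assumes "a \<in> span (orbit X)"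
  shows "fixer X \<subseteq> stab G \<rho> a"
proof
  fix n assume n: "n \<in> fixer X"
  then have nG: "n \<in> carrier G" by (simp add: fixer_def)
  have "subspace {x. \<rho> n x = x}"
    by (simp add: subspace_def rep_zero[OF nG] rep_add[OF nG] rep_scale[OF nG])
  then have "\<rho> n a = a" using span_induct[OF assms, of "\<lambda>x. \<rho> n x = x"] n subset_orbit
    by (auto simp: fixer_def)
  then show "n \<in> stab G \<rho> a" using nG by (simp add: stab_def)
qed

lemma openin_fixer:
  assumes "finite X"
  shows "openin T (fixer X)"
proof -
  define K where "K w = (SOME K. subgroup K G \<and> openin T K \<and> (\<forall>k\<in>K. \<rho> k w = w))" for w
  have K: "subgroup (K w) G" "openin T (K w)" "\<forall>k\<in>K w. \<rho> k w = w" for w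
    using someI_ex[OF smooth_vector[of w]] by (simp_all add: K_def)
  let ?U = "(\<Inter>w\<in>orbit X. K w) \<inter> topspace T"
  have "openin T ?U" by (rule openin_INT[OF finite_orbit[OF assms] K(2)])
  moreover have "?U \<subseteq> fixer X" using K(3) by (auto simp: topspace_eq fixer_def)
  moreover have "\<one> \<in> ?U" using subgroup.one_closed[OF K(1)] by (simp add: topspace_eq)
  ultimately show ?thesis by (intro openin_subgroup[OF subgroup_fixer])
qed

lemma finite_l_cosets_fixer:
  assumes "subgroup H G" and "finite X"
  shows "finite ((\<lambda>h. h <# (H \<inter> fixer X)) ` H)"
  by (rule finite_l_cosets_Int[OF assms(1) subgroup_fixer
        finite_l_cosets_openin[OF subgroup_fixer openin_fixer[OF assms(2)]]])

lemma normalises_Int_fixer: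
  assumes L: "subgroup L G" and "normalises G L H" and H: "subgroup H G"
  shows "normalises G L (H \<inter> fixer X)"
proof (rule normalisesI)
  show "L \<subseteq> carrier G" by (rule subgroup.subset[OF L])
  show "H \<inter> fixer X \<subseteq> carrier G" using subgroup.subset[OF H] by blast
  show "inv l \<in> L" if "l \<in> L" for l by (rule subgroup.m_inv_closed[OF L that])
  fix l u assume l: "l \<in> L" and u: "u \<in> H \<inter> fixer X"
  have lG: "l \<in> carrier G" and uG: "u \<in> carrier G"
    using subgroup.mem_carrier[OF L l] subgroup.mem_carrier[OF H] u by auto
  show "l \<otimes> u \<otimes> inv l \<in> H \<inter> fixer X"
    using normalises_conj_iff[OF assms(2) subgroup.subset[OF H] l lG uG]
      normalises_conj_iff[OF normalises_fixer[of X] subgroup.subset[OF subgroup_fixer] lG lG uG] u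
    by simp
qed

lemma haar_proj_eq_coset_avg_fixer:
  assumes H: "subgroup H G" and X: "finite X" and m: "m \<in> span (orbit X)"
  shows "haar_proj G scale \<rho> H m = coset_avg H (H \<inter> fixer X) m"
proof (rule haar_proj_eq_coset_avg[OF H subgroups_Inter_pair[OF H subgroup_fixer]])
  show "normalises G H (H \<inter> fixer X)" by (rule normalises_Int_fixer[OF H normalises_self[OF H] H])
  show "finite ((\<lambda>h. h <# (H \<inter> fixer X)) ` H)" by (rule finite_l_cosets_fixer[OF H X])
  show "H \<inter> fixer X \<subseteq> stab G \<rho> m" using fixer_subset_stab[OF m] by blast
  show "H \<inter> fixer X \<subseteq> H" by blast
qed

lemma linear_coset_avg_fixer:
  assumes "subgroup H G"
  shows "Vector_Spaces.linear scale scale (coset_avg H (H \<inter> fixer X))"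
  by (rule linear_coset_avg[OF assms subgroups_Inter_pair[OF assms subgroup_fixer]]) blast

lemma linear_haar_proj:
  assumes H: "subgroup H G"
  shows "Vector_Spaces.linear scale scale (haar_proj G scale \<rho> H)"
proof -
  have add: "haar_proj G scale \<rho> H (x + y) = haar_proj G scale \<rho> H x + haar_proj G scale \<rho> H y" for x y
  proof -
    interpret A: Vector_Spaces.linear scale scale "coset_avg H (H \<inter> fixer {x, y})"
      by (rule linear_coset_avg_fixer[OF H])
    have x: "x \<in> span (orbit {x, y})" and y: "y \<in> span (orbit {x, y})"
      using subset_orbit span_base by blast+
    show ?thesis
      using haar_proj_eq_coset_avg_fixer[OF H _ x] haar_proj_eq_coset_avg_fixer[OF H _ y]
        haar_proj_eq_coset_avg_fixer[OF H _ span_add[OF x y]] by (simp add: A.add)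
  qed
  have scale: "haar_proj G scale \<rho> H (c *s x) = c *s haar_proj G scale \<rho> H x" for c x
  proof -
    interpret A: Vector_Spaces.linear scale scale "coset_avg H (H \<inter> fixer {x})"
      by (rule linear_coset_avg_fixer[OF H])
    have x: "x \<in> span (orbit {x})" using subset_orbit span_base by blast
    show ?thesis
      using haar_proj_eq_coset_avg_fixer[OF H _ x] haar_proj_eq_coset_avg_fixer[OF H _ span_scale[OF x]]
      by (simp add: A.scale)
  qed
  show ?thesis using add scale by (simp add: linear_iff_module_hom module_hom_iff module_axioms)
qed

lemma haar_proj_invariant:
  assumes H: "subgroup H G" and u: "u \<in> H"
  shows "\<rho> u (haar_proj G scale \<rho> H m) = haar_proj G scale \<rho> H m"
  using coset_avg_invariant[OF H subgroups_Inter_pair[OF H subgroup_stab] _ _ u] by (simp add: haar_proj_eq)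

lemma haar_proj_idem:
  assumes H: "subgroup H G"
  shows "haar_proj G scale \<rho> H (haar_proj G scale \<rho> H m) = haar_proj G scale \<rho> H m"
proof -
  let ?p = "haar_proj G scale \<rho> H m"
  have "?p \<in> span (orbit {?p})" using subset_orbit span_base by blast
  then have "haar_proj G scale \<rho> H ?p = coset_avg H (H \<inter> fixer {?p}) ?p"
    by (rule haar_proj_eq_coset_avg_fixer[OF H, rotated]) simp
  also have "\<dots> = ?p"
    by (rule coset_avg_fixed[OF H subgroups_Inter_pair[OF H subgroup_fixer] _ finite_l_cosets_fixer[OF H]])
      (simp_all add: haar_proj_invariant[OF H])
  finally show ?thesis .
qed

lemma haar_proj_commute:
  assumes H: "subgroup H G" and L: "subgroup L G" and LH: "normalises G L H" and l: "l \<in> L"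
  shows "haar_proj G scale \<rho> H (\<rho> l m) = \<rho> l (haar_proj G scale \<rho> H m)"
proof -
  let ?J = "H \<inter> fixer {m}"
  have m: "m \<in> span (orbit {m})" using subset_orbit span_base by blast
  have lm: "\<rho> l m \<in> span (orbit {m})" by (rule span_orbit_closed[OF subgroup.mem_carrier[OF L l] m])
  have "coset_avg H ?J (\<rho> l m) = \<rho> l (coset_avg H ?J m)"
    by (rule coset_avg_conj[OF H subgroups_Inter_pair[OF H subgroup_fixer] _ L LH
          normalises_Int_fixer[OF L LH H] l])
      (use fixer_subset_stab[OF m] in blast)+
  then show ?thesis
    using haar_proj_eq_coset_avg_fixer[OF H _ m] haar_proj_eq_coset_avg_fixer[OF H _ lm] by simp
qed

lemma haar_proj_span_orbit:
  assumes H: "subgroup H G" and X: "finite X" and m: "m \<in> span (orbit X)"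
  shows "haar_proj G scale \<rho> H m \<in> span (orbit X)"
  using coset_avg_subspace[OF H subgroups_Inter_pair[OF H subgroup_fixer] _ subspace_span _ m]
    span_orbit_closed subgroup.mem_carrier[OF H] haar_proj_eq_coset_avg_fixer[OF H X m]
  by auto

section \<open>An invariant inner product on the span of a finite orbit\<close>

definition coord_inner :: "'v set \<Rightarrow> 'v \<Rightarrow> 'v \<Rightarrow> real" where
  "coord_inner Bs a b = (\<Sum>\<beta>\<in>Bs. inner (representation Bs a \<beta>) (representation Bs b \<beta>))"

text \<open>\<open>G\<close> acts on \<open>span (orbit X)\<close> through the finite quotient \<open>G/fixer X\<close>; averaging over it
  makes the coordinate inner product invariant.\<close>
definition invariant_form :: "'v set \<Rightarrow> 'v set \<Rightarrow> 'v \<Rightarrow> 'v \<Rightarrow> real" where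
  "invariant_form X Bs a b =
     (\<Sum>C\<in>(\<lambda>g. g <# fixer X) ` carrier G. coord_inner Bs (\<rho> (coset_rep C) a) (\<rho> (coset_rep C) b))"

lemma invariant_form_sym: "invariant_form X Bs a b = invariant_form X Bs b a"
  by (simp add: invariant_form_def coord_inner_def inner_commute)

context
  fixes X Bs
  assumes X: "finite X" and Bs: "independent Bs" and span_Bs: "span Bs = span (orbit X)"
begin

lemma finite_basis: "finite Bs"
  using independent_span_bound[OF finite_orbit[OF X] Bs] span_Bs span_superset by blast

lemma coord_inner_diff_left:
  "a \<in> span (orbit X) \<Longrightarrow> b \<in> span (orbit X) \<Longrightarrow> coord_inner Bs (a - b) c = coord_inner Bs a c - coord_inner Bs b c"
  unfolding coord_inner_def using representation_diff[OF Bs, of b a] span_Bs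
  by (simp add: inner_diff_left sum_subtractf)

lemma coord_inner_add_left:
  "a \<in> span (orbit X) \<Longrightarrow> b \<in> span (orbit X) \<Longrightarrow> coord_inner Bs (a + b) c = coord_inner Bs a c + coord_inner Bs b c"
  unfolding coord_inner_def using representation_add[OF Bs, of b a] span_Bs
  by (simp add: inner_add_left sum.distrib)

lemma coord_inner_scale_left:
  "a \<in> span (orbit X) \<Longrightarrow> coord_inner Bs (complex_of_real r *s a) c = r * coord_inner Bs a c"
  unfolding coord_inner_def using representation_scale[OF Bs, of a] span_Bs
  by (simp add: inner_complex_def sum_distrib_left algebra_simps)

lemma coord_inner_nonneg: "0 \<le> coord_inner Bs a a"
  by (simp add: coord_inner_def sum_nonneg)

lemma coord_inner_anisotropic:
  assumes a: "a \<in> span (orbit X)" and "coord_inner Bs a a = 0"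
  shows "a = 0"
proof -
  have "\<forall>\<beta>\<in>Bs. representation Bs a \<beta> = 0"
    using assms(2) unfolding coord_inner_def by (subst (asm) sum_nonneg_eq_0_iff[OF finite_basis]) simp_all
  then have "(\<Sum>\<beta>\<in>Bs. representation Bs a \<beta> *s \<beta>) = 0" by simp
  then show ?thesis using sum_representation_eq[OF Bs _ finite_basis order_refl] a span_Bs by simp
qed

lemma coset_rep_fixer_carrier: "C \<in> (\<lambda>g. g <# fixer X) ` carrier G \<Longrightarrow> coset_rep C \<in> carrier G"
  using coset_rep_mem(1)[OF subgroup_fixer subgroup_self subgroup.subset[OF subgroup_fixer]] by blast

lemma invariant_form_diff_left:
  "a \<in> span (orbit X) \<Longrightarrow> b \<in> span (orbit X)
    \<Longrightarrow> invariant_form X Bs (a - b) c = invariant_form X Bs a c - invariant_form X Bs b c"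
  unfolding invariant_form_def
  by (simp add: rep_diff coset_rep_fixer_carrier coord_inner_diff_left span_orbit_closed sum_subtractf
      cong: sum.cong)

lemma invariant_form_sum_left:
  "(\<And>i. i \<in> I \<Longrightarrow> a i \<in> span (orbit X))
    \<Longrightarrow> invariant_form X Bs (\<Sum>i\<in>I. a i) c = (\<Sum>i\<in>I. invariant_form X Bs (a i) c)"
proof (induction I rule: infinite_finite_induct)
  case (insert i I)
  then show ?case
    by (simp add: invariant_form_def rep_add coset_rep_fixer_carrier coord_inner_add_left
        span_orbit_closed span_sum sum.distrib cong: sum.cong)
qed (simp_all add: invariant_form_def coord_inner_def rep_zero coset_rep_fixer_carrier representation_zero)

lemma invariant_form_scale_left:
  "a \<in> span (orbit X) \<Longrightarrow> invariant_form X Bs (complex_of_real r *s a) c = r * invariant_form X Bs a c"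
  unfolding invariant_form_def
  by (simp add: rep_scale coset_rep_fixer_carrier coord_inner_scale_left span_orbit_closed
      sum_distrib_left cong: sum.cong)

lemma invariant_form_anisotropic:
  assumes a: "a \<in> span (orbit X)" and "invariant_form X Bs a a = 0"
  shows "a = 0"
proof -
  let ?cosets = "(\<lambda>g. g <# fixer X) ` carrier G"
  have "finite ?cosets" by (rule finite_l_cosets_openin[OF subgroup_fixer openin_fixer[OF X]])
  then have "\<forall>C\<in>?cosets. coord_inner Bs (\<rho> (coset_rep C) a) (\<rho> (coset_rep C) a) = 0"
    using assms(2) unfolding invariant_form_def
    by (subst (asm) sum_nonneg_eq_0_iff) (simp_all add: coord_inner_nonneg)
  moreover have one: "\<one> <# fixer X \<in> ?cosets" by blast
  ultimately have "\<rho> (coset_rep (\<one> <# fixer X)) a = 0"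
    using coord_inner_anisotropic span_orbit_closed[OF coset_rep_fixer_carrier[OF one] a] by blast
  then show ?thesis using rep_inv_cancel[OF coset_rep_fixer_carrier[OF one], of a]
    by (simp add: rep_zero coset_rep_fixer_carrier[OF one])
qed

lemma invariant_form_invariant:
  assumes g: "g \<in> carrier G" and a: "a \<in> span (orbit X)" and b: "b \<in> span (orbit X)"
  shows "invariant_form X Bs (\<rho> g a) (\<rho> g b) = invariant_form X Bs a b"
proof -
  let ?N = "fixer X"
  have "(\<Sum>C\<in>(\<lambda>h. h <# ?N) ` carrier G. coord_inner Bs (\<rho> (coset_rep C \<otimes> g) a) (\<rho> (coset_rep C \<otimes> g) b))
      = (\<Sum>C\<in>(\<lambda>h. h <# ?N) ` carrier G. coord_inner Bs (\<rho> (coset_rep C) a) (\<rho> (coset_rep C) b))"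
  proof (rule sum_l_cosets_reindex[OF subgroup_fixer subgroup_self subgroup.subset[OF subgroup_fixer]
        _ bij_betw_mult_right[OF subgroup_self g], where \<phi> = "\<lambda>x. coord_inner Bs (\<rho> x a) (\<rho> x b)"])
    show "coord_inner Bs (\<rho> (x \<otimes> n) a) (\<rho> (x \<otimes> n) b) = coord_inner Bs (\<rho> x a) (\<rho> x b)"
      if "x \<in> carrier G" "n \<in> ?N" for x n
    proof -
      have "n \<in> carrier G" "\<rho> n a = a" "\<rho> n b = b"
        using that(2) fixer_subset_stab[OF a] fixer_subset_stab[OF b] by (auto simp: stab_def)
      then show ?thesis using that(1) by (simp add: rep_mult)
    qed
    show "inv (x \<otimes> g) \<otimes> (y \<otimes> g) \<in> ?N \<longleftrightarrow> inv x \<otimes> y \<in> ?N" if "x \<in> carrier G" "y \<in> carrier G" for x y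
      using normalises_conj_iff[OF normalises_fixer subgroup.subset[OF subgroup_fixer], of "inv g" "inv x \<otimes> y"]
        that g by (simp add: inv_mult_group m_assoc)
  qed
  then show ?thesis using g by (simp add: invariant_form_def rep_mult coset_rep_fixer_carrier)
qed

lemma coset_avg_self_adjoint:
  assumes H: "subgroup H G" and J: "subgroup J G" and JH: "J \<subseteq> H" and HJ: "normalises G H J"
    and JN: "J \<subseteq> fixer X" and a: "a \<in> span (orbit X)" and b: "b \<in> span (orbit X)"
  shows "invariant_form X Bs (coset_avg H J a) b = invariant_form X Bs a (coset_avg H J b)"
proof -
  let ?cosets = "(\<lambda>h. h <# J) ` H" and ?B = "invariant_form X Bs"
  have HG: "x \<in> H \<Longrightarrow> x \<in> carrier G" for x by (rule subgroup.mem_carrier[OF H])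
  have rep: "C \<in> ?cosets \<Longrightarrow> coset_rep C \<in> H" for C by (rule coset_rep_mem(1)[OF J H JH])
  define k where "k = 1 / real (card ?cosets)"
  have expand: "?B (coset_avg H J x) y = k * (\<Sum>C\<in>?cosets. ?B (\<rho> (coset_rep C) x) y)"
    if x: "x \<in> span (orbit X)" for x y
    using invariant_form_scale_left[of "\<Sum>C\<in>?cosets. \<rho> (coset_rep C) x" k y]
      invariant_form_sum_left[of ?cosets "\<lambda>C. \<rho> (coset_rep C) x" y]
      span_orbit_closed[OF HG[OF rep] x] span_sum[of ?cosets "\<lambda>C. \<rho> (coset_rep C) x"]
    by (simp add: coset_avg_def k_def)
  have "(\<Sum>C\<in>?cosets. ?B a (\<rho> (inv (coset_rep C)) b)) = (\<Sum>C\<in>?cosets. ?B a (\<rho> (coset_rep C) b))"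
  proof (rule sum_l_cosets_reindex[OF J H JH _ bij_betw_inv[OF H], where \<phi> = "\<lambda>x. ?B a (\<rho> x b)"])
    show "?B a (\<rho> (x \<otimes> j) b) = ?B a (\<rho> x b)" if "x \<in> H" "j \<in> J" for x j
      using that JN fixer_subset_stab[OF b] HG by (auto simp: stab_def rep_mult)
    show "inv (inv x) \<otimes> inv y \<in> J \<longleftrightarrow> inv x \<otimes> y \<in> J" if x: "x \<in> H" and y: "y \<in> H" for x y
    proof -
      have "inv (inv x) \<otimes> inv y = x \<otimes> inv (inv x \<otimes> y) \<otimes> inv x"
        using HG[OF x] HG[OF y] by (simp add: inv_mult_group m_assoc)
      then show ?thesis
        using normalises_conj_iff[OF HJ subgroup.subset[OF J] x HG[OF x], of "inv (inv x \<otimes> y)"]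
          HG[OF x] HG[OF y] subgroup.m_inv_closed[OF J] by (metis inv_closed inv_inv m_closed)
    qed
  qed
  moreover have "?B (\<rho> g a) b = ?B a (\<rho> (inv g) b)" if "g \<in> carrier G" for g
    using invariant_form_invariant[OF inv_closed[OF that] span_orbit_closed[OF that a] b]
      rep_inv_cancel[OF that] by simp
  ultimately have "?B (coset_avg H J a) b = k * (\<Sum>C\<in>?cosets. ?B (\<rho> (coset_rep C) b) a)"
    using expand[OF a] HG rep by (simp add: invariant_form_sym)
  also have "\<dots> = ?B a (coset_avg H J b)" using expand[OF b] invariant_form_sym by simp
  finally show ?thesis .
qed

end

lemma haar_proj_self_adjoint:
  assumes H: "subgroup H G" and X: "finite X" and Bs: "independent Bs" and span_Bs: "span Bs = span (orbit X)"
    and a: "a \<in> span (orbit X)" and b: "b \<in> span (orbit X)"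
  shows "invariant_form X Bs (haar_proj G scale \<rho> H a) b = invariant_form X Bs a (haar_proj G scale \<rho> H b)"
  using coset_avg_self_adjoint[OF X Bs span_Bs H subgroups_Inter_pair[OF H subgroup_fixer] _
      normalises_Int_fixer[OF H normalises_self[OF H] H] _ a b]
    haar_proj_eq_coset_avg_fixer[OF H X a] haar_proj_eq_coset_avg_fixer[OF H X b]
  by simp

lemma haar_proj_self_adjoint_frame:
  assumes U: "subgroup U G" and V: "subgroup V G"
  shows "\<exists>S B. self_adjoint_frame scale (haar_proj G scale \<rho> U) (haar_proj G scale \<rho> V) S B \<and> x \<in> span S"
proof -
  let ?S = "orbit {x}"
  have X: "finite {x}" by simp
  obtain Bs where Bs: "Bs \<subseteq> ?S" "independent Bs" "?S \<subseteq> span Bs" by (rule maximal_independent_subset)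
  have span_Bs: "span Bs = span ?S"
    using span_mono[OF Bs(1)] span_minimal[OF Bs(3) subspace_span] by blast
  have "self_adjoint_frame scale (haar_proj G scale \<rho> U) (haar_proj G scale \<rho> V) ?S (invariant_form {x} Bs)"
  proof (intro self_adjoint_frame.intro self_adjoint_frame_axioms.intro vector_space_axioms)
    show "finite ?S" by (rule finite_orbit[OF X])
  qed (rule invariant_form_sym | simp add: haar_proj_span_orbit[OF U X] haar_proj_span_orbit[OF V X]
      invariant_form_diff_left[OF X Bs(2) span_Bs] invariant_form_anisotropic[OF X Bs(2) span_Bs]
      haar_proj_self_adjoint[OF U X Bs(2) span_Bs] haar_proj_self_adjoint[OF V X Bs(2) span_Bs])+
  moreover have "x \<in> span ?S" using subset_orbit span_base by blast
  ultimately show ?thesis by blast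
qed

lemma locally_self_adjoint_haar_projections:
  assumes U: "subgroup U G" and V: "subgroup V G"
  shows "locally_self_adjoint_projections scale (haar_proj G scale \<rho> U) (haar_proj G scale \<rho> V)"
  by (intro locally_self_adjoint_projections.intro locally_self_adjoint_projections_axioms.intro
      vector_space_axioms linear_haar_proj haar_proj_idem haar_proj_self_adjoint_frame U V)

end

theorem mainTheorem1:
  fixes G :: "('g, 'b) monoid_scheme" and T :: "'g topology"
    and L U V :: "'g set"
    and smul :: "complex \<Rightarrow> 'v::ab_group_add \<Rightarrow> 'v" and \<rho> :: "'g \<Rightarrow> 'v \<Rightarrow> 'v"
  assumes "profinite_group G T"
    and "closed_subgroup G T L" and "closed_subgroup G T U" and "closed_subgroup G T V"
    and "normalises G L U" and "normalises G L V"
    and "smooth_rep G T smul \<rho>"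
  shows "\<exists>z :: 'v \<Rightarrow> 'v.
           Vector_Spaces.linear smul smul z \<and> bij z \<and>
           (\<forall>l \<in> L. z \<circ> \<rho> l = \<rho> l \<circ> z) \<and>
           z \<circ> haar_proj G smul \<rho> U = haar_proj G smul \<rho> U \<circ> z \<and>
           z \<circ> haar_proj G smul \<rho> V = haar_proj G smul \<rho> V \<circ> z \<and>
           (let p = Hilbert_Choice.inv z \<circ> haar_proj G smul \<rho> U \<circ> haar_proj G smul \<rho> V in p \<circ> p = p)"
proof -
  interpret smooth_representation G T smul \<rho>
    using assms(1,7) by (simp add: smooth_representation_def smooth_representation_axioms_def
        profinite_def profinite_axioms_def profinite_group_def)
  have L: "subgroup L G" and U: "subgroup U G" and V: "subgroup V G"
    using assms(2-4) by (simp_all add: closed_subgroup_def)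
  interpret Z: locally_self_adjoint_projections smul "haar_proj G smul \<rho> U" "haar_proj G smul \<rho> V"
    by (rule locally_self_adjoint_haar_projections[OF U V])
  have "Z.z_op \<circ> \<rho> l = \<rho> l \<circ> Z.z_op" if "l \<in> L" for l
    using that subgroup.mem_carrier[OF L]
    by (intro Z.z_op_comm) (simp_all add: rep_add haar_proj_commute[OF U L assms(5)]
        haar_proj_commute[OF V L assms(6)])
  then show ?thesis
    using Z.linear_z_op Z.bij_z_op Z.z_op_comm_P Z.z_op_comm_Q Z.idempotent_inv_z_op_PQ by blast
qed

end
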